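(* Let $N=3$ and let $(p_1,p_2,p_3)$ be a probability vector with $$4p_1^2p_2p_3-\big(p_1-p_1^2-p_2p_3\big)^2\ge0$$ (the closed region bounded by the 3-hypocycloid). Then the Weyl channel $\Phi_{\vec p}=p_1\,\mathbb{I}\otimes\mathbb{I}+p_2\,X\otimes\overline{X}+p_3\,X^2\otimes\overline{X^2}$ is unistochastic, $\Phi_{\vec p}\in\mathcal{U}_3^Q$, and the corresponding transition matrix $T(\Phi_{\vec p})=p_1\mathbb{I}_3+p_2X+p_3X^2$ is unistochastic, $T(\Phi_{\vec p})\in\mathcal{U}_3^C$.
   Context: $X$ is the $3\times3$ shift $X|j\rangle=|j\oplus1\rangle$ (addition mod 3). Channels are identified with superoperators acting on $|A\rangle\rangle=\sum A_{ij}|i\rangle|j\rangle$ ($\rho\mapsto K\rho K^\dagger$ corresponds to $K\otimes\overline K$). $\mathcal{U}_3^Q$ is the set of channels $\Psi_U(\rho)=\mathrm{Tr}_E[U(\rho\otimes\mathbb{I}_3/3)U^\dagger]$ with $U\in U(9)$ acting on $\mathbb{C}^3\otimes\mathbb{C}^3_E$; $\mathcal{U}_3^C=\{V\odot\overline{V}:V\in U(3)\}$ with $\odot$ the entrywise product. The transition matrix of a channel is $T(\Phi)_{ij}=\mathrm{Tr}[|i\rangle\langle i|\,\Phi(|j\rangle\langle j|)]$. *)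

theory Defs
  imports "HOL-Analysis.Analysis" "HOL-Library.Numeral_Type"
begin

type_synonym cmat3 = "complex ^ 3 ^ 3"
type_synonym cmat9 = "complex ^ (3 \<times> 3) ^ (3 \<times> 3)"

definition adj :: "complex ^ 'n ^ 'm \<Rightarrow> complex ^ 'm ^ 'n" where
  "adj A = (\<chi> i j. cnj (A $ j $ i))"

definition unitary_mat :: "complex ^ 'n ^ 'n \<Rightarrow> bool" where
  "unitary_mat U \<longleftrightarrow> U ** adj U = mat 1 \<and> adj U ** U = mat 1"

definition shiftX :: cmat3 where
  "shiftX = (\<chi> i j. if i = j + 1 then 1 else 0)"

definition kraus :: "cmat3 \<Rightarrow> cmat3 \<Rightarrow> cmat3" where
  "kraus K \<rho> = K ** \<rho> ** adj K"

definition weyl_channel :: "real \<Rightarrow> real \<Rightarrow> real \<Rightarrow> cmat3 \<Rightarrow> cmat3" where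
  "weyl_channel p1 p2 p3 \<rho> =
     p1 *\<^sub>R \<rho>
     + p2 *\<^sub>R kraus shiftX \<rho>
     + p3 *\<^sub>R kraus (shiftX ** shiftX) \<rho>"

definition tensor_max_mixed :: "cmat3 \<Rightarrow> cmat9" where
  "tensor_max_mixed \<rho> = (\<chi> x y. \<rho> $ fst x $ fst y * (if snd x = snd y then 1 / 3 else 0))"

definition ptrace_E :: "cmat9 \<Rightarrow> cmat3" where
  "ptrace_E M = (\<chi> i j. \<Sum>a\<in>UNIV. M $ (i, a) $ (j, a))"

definition Psi :: "cmat9 \<Rightarrow> cmat3 \<Rightarrow> cmat3" where
  "Psi U \<rho> = ptrace_E (U ** tensor_max_mixed \<rho> ** adj U)"

definition unistochastic_channel :: "(cmat3 \<Rightarrow> cmat3) \<Rightarrow> bool" where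
  "unistochastic_channel \<Phi> \<longleftrightarrow> (\<exists>U::cmat9. unitary_mat U \<and> \<Phi> = Psi U)"

definition proj :: "3 \<Rightarrow> cmat3" where
  "proj j = (\<chi> a b. if a = j \<and> b = j then 1 else 0)"

definition transition_matrix :: "(cmat3 \<Rightarrow> cmat3) \<Rightarrow> cmat3" where
  "transition_matrix \<Phi> = (\<chi> i j. trace (proj i ** \<Phi> (proj j)))"

definition unistochastic_matrix :: "cmat3 \<Rightarrow> bool" where
  "unistochastic_matrix T \<longleftrightarrow>
     (\<exists>V::cmat3. unitary_mat V \<and> T = (\<chi> i j. V $ i $ j * cnj (V $ i $ j)))"

end

theory Submission
  imports Defs
begin

(* The hypocycloid inequality says exactly that x = sqrt (p1 p2), y = sqrt (p2 p3) and
   z = sqrt (p1 p3) satisfy |x - z| <= y <= x + z, i.e. they are the sides of a possibly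
   degenerate triangle. Closing this triangle with unimodular phases produces amplitudes a, b, c
   with |a|^2 = p1, |b|^2 = p2, |c|^2 = p3 and a conj b + b conj c + c conj a = 0, which, as the
   p_i sum to 1, is precisely the unitarity of the circulant V with V_ij = (a, b, c)_(i - j). The entrywise squared
   moduli of V form p1 I + p2 X + p3 X^2. For the channel, the controlled shift U built from V is
   unitary, and tracing out the maximally mixed environment leaves the average over e, g of
   |V_eg|^2 X^(e - g) rho X^(g - e); as |V_eg|^2 depends only on e - g, this is the Weyl channel. *)

lemma unimodular_cube_root: "\<exists>u. cmod u = 1 \<and> complex_of_real (cmod w) * u ^ 3 = w"
proof (intro exI conjI)
  have "cis (Arg w / 3) ^ 3 = cis (Arg w)"
    by (simp add: Complex.DeMoivre)
  then show "complex_of_real (cmod w) * cis (Arg w / 3) ^ 3 = w"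
    by (metis rcis_cmod_Arg rcis_def)
qed simp

lemma unimodular_law_of_cosines:
  fixes x y z :: real
  assumes "x \<ge> 0" "y \<ge> 0" "z \<ge> 0" and triangle: "(x\<^sup>2 + z\<^sup>2 - y\<^sup>2)\<^sup>2 \<le> 4 * x\<^sup>2 * z\<^sup>2"
  shows "\<exists>t. cmod t = 1 \<and> cmod (of_real x + of_real z * t) = y"
proof -
  (* c is the cosine of the angle opposite y; if x z = 0, division by zero yields c = 0,
     which is still right because then y^2 = x^2 + z^2. *)
  define c where "c = (y\<^sup>2 - x\<^sup>2 - z\<^sup>2) / (2 * x * z)"
  have "x\<^sup>2 + z\<^sup>2 + 2 * x * z * c = y\<^sup>2 \<and> c\<^sup>2 \<le> 1"
  proof (cases "x * z = 0")
    case True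
    then have "(x\<^sup>2 + z\<^sup>2 - y\<^sup>2)\<^sup>2 \<le> 0"
      using triangle by auto
    moreover have "c = 0"
      using True by (auto simp: c_def)
    ultimately show ?thesis
      by simp
  next
    case False
    then show ?thesis
      using triangle by (simp add: c_def field_simps power_divide power_mult_distrib power2_commute)
  qed
  then have c_law: "x\<^sup>2 + z\<^sup>2 + 2 * x * z * c = y\<^sup>2" and c_bound: "c\<^sup>2 \<le> 1"
    by simp_all
  define t where "t = Complex c (sqrt (1 - c\<^sup>2))"
  have "cmod t = 1"
    using c_bound by (simp add: t_def cmod_def)
  moreover have "(cmod (of_real x + of_real z * t))\<^sup>2 = y\<^sup>2"
    using c_bound c_law by (simp add: t_def cmod_def power2_eq_square algebra_simps)
  ultimately show ?thesis
    using \<open>y \<ge> 0\<close> by (metis norm_ge_zero power2_eq_iff_nonneg)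
qed

lemma unimodular_mult_cnj: "cmod u = 1 \<Longrightarrow> u * cnj u = 1"
  by (metis complex_norm_square of_real_1 power_one)

lemma hypocycloid_amplitudes:
  fixes p1 p2 p3 :: real
  assumes "p1 \<ge> 0" "p2 \<ge> 0" "p3 \<ge> 0" "p1 + p2 + p3 = 1"
    and hypocycloid: "4 * p1^2 * p2 * p3 - (p1 - p1^2 - p2 * p3)^2 \<ge> 0"
  shows "\<exists>a b c. a * cnj a = p1 \<and> b * cnj b = p2 \<and> c * cnj c = p3
           \<and> a * cnj b + b * cnj c + c * cnj a = 0"
proof -
  define x y z where "x = sqrt (p1 * p2)" and "y = sqrt (p2 * p3)" and "z = sqrt (p1 * p3)"
  have "(x\<^sup>2 + z\<^sup>2 - y\<^sup>2)\<^sup>2 \<le> 4 * x\<^sup>2 * z\<^sup>2"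
  proof -
    have "x\<^sup>2 + z\<^sup>2 - y\<^sup>2 = p1 * (p1 + p2 + p3) - p1^2 - p2 * p3"
      using assms(1-3) by (simp add: x_def y_def z_def power2_eq_square algebra_simps)
    then have "x\<^sup>2 + z\<^sup>2 - y\<^sup>2 = p1 - p1^2 - p2 * p3"
      using assms(4) by simp
    moreover have "4 * x\<^sup>2 * z\<^sup>2 = 4 * p1^2 * p2 * p3"
      using assms(1-3) by (simp add: x_def z_def power2_eq_square)
    ultimately show ?thesis
      using hypocycloid by simp
  qed
  moreover have "x \<ge> 0" "y \<ge> 0" "z \<ge> 0"
    using assms(1-3) by (simp_all add: x_def y_def z_def)
  ultimately obtain t where t: "cmod t = 1" "cmod (of_real x + of_real z * t) = y"
    using unimodular_law_of_cosines by blast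
  (* With b = sqrt p2 u and c = sqrt p3 (conj u) t, orthogonality amounts to
     y u^3 = - t (x + z t), a right-hand side of modulus y: so u is a unimodular cube root. *)
  define k where "k = - t * (of_real x + of_real z * t)"
  obtain u where u: "cmod u = 1" "of_real (cmod k) * u ^ 3 = k"
    using unimodular_cube_root by blast
  have "cmod k = y"
    using t by (simp add: k_def norm_mult)
  with u have y_u3: "of_real y * u ^ 3 = - t * (of_real x + of_real z * t)"
    by (simp add: k_def)
  define a b c where "a = complex_of_real (sqrt p1)" and "b = complex_of_real (sqrt p2) * u"
    and "c = complex_of_real (sqrt p3) * cnj u * t"
  have "a * cnj b + b * cnj c + c * cnj a
      = cnj u * (of_real x + of_real z * t) + (of_real y * u ^ 3) * cnj u * cnj t"
    using unimodular_mult_cnj[OF u(1)]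
    by (simp add: a_def b_def c_def x_def y_def z_def real_sqrt_mult power3_eq_cube algebra_simps)
  also have "\<dots> = cnj u * (of_real x + of_real z * t) * (1 - t * cnj t)"
    by (simp add: y_u3 algebra_simps)
  finally have "a * cnj b + b * cnj c + c * cnj a = 0"
    using unimodular_mult_cnj[OF t(1)] by simp
  moreover have "cmod a = sqrt p1" "cmod b = sqrt p2" "cmod c = sqrt p3"
    using assms(1-3) u(1) t(1) by (simp_all add: a_def b_def c_def norm_mult)
  then have "a * cnj a = p1" "b * cnj b = p2" "c * cnj c = p3"
    using assms(1-3) by (simp_all flip: complex_norm_square)
  ultimately show ?thesis
    by blast
qed

lemma sum_UNIV_pair: "sum g UNIV = (\<Sum>x\<in>UNIV. \<Sum>y\<in>UNIV. g (x, y))"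
  by (metis sum.cartesian_product' UNIV_Times_UNIV)

lemma sum_UNIV_diff_reindex:
  fixes h :: "'n::{finite,ab_group_add} \<Rightarrow> 'a::comm_monoid_add"
  shows "(\<Sum>g\<in>UNIV. h (e - g)) = (\<Sum>k\<in>UNIV. h k)"
  by (rule sum.reindex_bij_witness[of _ "\<lambda>k. e - k" "\<lambda>k. e - k"]) auto

lemma diff_eq_iff_eq_diff: "i - l = k \<longleftrightarrow> l = i - (k::'a::ab_group_add)"
  by (auto simp: algebra_simps)

lemma unitary_mat_iff_right_inverse: "unitary_mat U \<longleftrightarrow> U ** adj U = mat 1"
  using matrix_left_right_inverse1 unfolding unitary_mat_def by blast

definition circulant ::
    "('n::{finite,ab_group_add} \<Rightarrow> 'a) \<Rightarrow> 'a ^ 'n::{finite,ab_group_add} ^ 'n::{finite,ab_group_add}"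
  where
  "circulant f = (\<chi> i j. f (i - j))"

lemma circulant_entry [simp]: "circulant f $ i $ j = f (i - j)"
  by (simp add: circulant_def)

lemma unitary_circulant:
  fixes f :: "'n::{finite,ab_group_add} \<Rightarrow> complex"
  assumes autocorrelation: "\<And>d. (\<Sum>k\<in>UNIV. f (k + d) * cnj (f k)) = (if d = 0 then 1 else 0)"
  shows "unitary_mat (circulant f)"
  unfolding unitary_mat_iff_right_inverse vec_eq_iff
proof (intro allI)
  fix i j :: 'n
  have "(circulant f ** adj (circulant f)) $ i $ j = (\<Sum>l\<in>UNIV. f (i - j + (j - l)) * cnj (f (j - l)))"
    by (simp add: matrix_matrix_mult_def adj_def)
  also have "\<dots> = (\<Sum>k\<in>UNIV. f (i - j + k) * cnj (f k))"
    by (rule sum_UNIV_diff_reindex)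
  finally show "(circulant f ** adj (circulant f)) $ i $ j = mat 1 $ i $ j"
    by (simp add: autocorrelation add.commute mat_def)
qed

lemma exhaust_3_zero: "(k::3) = 0 \<or> k = 1 \<or> k = 2"
  using exhaust_3[of k] by auto

lemma sum_UNIV_3: "(\<Sum>k\<in>UNIV. f k) = f 0 + f 1 + f (2::3)"
proof -
  have three: "(3::3) = 0"
    by simp
  show ?thesis
    using sum_3[of f] by (simp add: three ac_simps)
qed

definition cyclic3 :: "'a \<Rightarrow> 'a \<Rightarrow> 'a \<Rightarrow> 3 \<Rightarrow> 'a" where
  "cyclic3 a b c k = (if k = 0 then a else if k = 1 then b else c)"

lemma cyclic3_simps [simp]: "cyclic3 a b c 0 = a" "cyclic3 a b c 1 = b" "cyclic3 a b c 2 = c"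
  by (simp_all add: cyclic3_def)

lemma unitary_circulant3:
  assumes "a * cnj a + b * cnj b + c * cnj c = 1" and orth: "a * cnj b + b * cnj c + c * cnj a = 0"
  shows "unitary_mat (circulant (cyclic3 a b c))"
proof (rule unitary_circulant)
  have "cnj a * b + cnj b * c + cnj c * a = 0"
    using arg_cong[OF orth, of cnj] by (simp add: mult.commute)
  then show "(\<Sum>k\<in>UNIV. cyclic3 a b c (k + d) * cnj (cyclic3 a b c k)) = (if d = 0 then 1 else 0)" for d
    using exhaust_3_zero[of d] assms by (auto simp: sum_UNIV_3 cyclic3_def algebra_simps)
qed

(* U = sum_(e,g) V_eg X^(e - g) (x) |e><g|, with the environment as second tensor factor. *)
definition controlled_shift ::
    "complex ^ 'n::{finite,ab_group_add} ^ 'n::{finite,ab_group_add}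
      \<Rightarrow> complex ^ ('n \<times> 'n) ^ ('n \<times> 'n)" where
  "controlled_shift V =
     (\<chi> x y. if fst x - snd x = fst y - snd y then V $ snd x $ snd y else 0)"

lemma controlled_shift_mult_entry:
  "(controlled_shift V ** M) $ (i, a) $ y = (\<Sum>b\<in>UNIV. V $ a $ b * M $ (i - a + b, b) $ y)"
proof -
  have "(controlled_shift V ** M) $ (i, a) $ y
      = (\<Sum>l\<in>UNIV. \<Sum>b\<in>UNIV. if l = i - a + b then V $ a $ b * M $ (l, b) $ y else 0)"
    by (simp add: matrix_matrix_mult_def controlled_shift_def sum_UNIV_pair eq_diff_eq eq_commute
        if_distrib[of "\<lambda>z. z * _"] cong: if_cong)
  also have "\<dots> = (\<Sum>b\<in>UNIV. \<Sum>l\<in>UNIV. if l = i - a + b then V $ a $ b * M $ (l, b) $ y else 0)"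
    by (rule sum.swap)
  finally show ?thesis
    by simp
qed

lemma mult_adj_controlled_shift_entry:
  "(M ** adj (controlled_shift V)) $ x $ (j, c) = (\<Sum>b\<in>UNIV. M $ x $ (j - c + b, b) * cnj (V $ c $ b))"
proof -
  have "(M ** adj (controlled_shift V)) $ x $ (j, c) = cnj ((controlled_shift V ** adj M) $ (j, c) $ x)"
    by (simp add: matrix_matrix_mult_def adj_def mult.commute)
  then show ?thesis
    by (simp add: controlled_shift_mult_entry adj_def mult.commute)
qed

lemma unitary_controlled_shift:
  fixes V :: "complex ^ 'n::{finite,ab_group_add} ^ 'n::{finite,ab_group_add}"
  assumes "unitary_mat V"
  shows "unitary_mat (controlled_shift V)"
  unfolding unitary_mat_iff_right_inverse vec_eq_iff
proof (intro allI)
  fix x y :: "'n \<times> 'n"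
  obtain i a j c where "x = (i, a)" "y = (j, c)"
    by fastforce
  have "(controlled_shift V ** adj (controlled_shift V)) $ (i, a) $ (j, c)
      = (\<Sum>b\<in>UNIV. controlled_shift V $ (i, a) $ (j - c + b, b) * cnj (V $ c $ b))"
    by (rule mult_adj_controlled_shift_entry)
  also have "\<dots> = (if i - a = j - c then (V ** adj V) $ a $ c else 0)"
    by (simp add: controlled_shift_def matrix_matrix_mult_def adj_def)
  also have "\<dots> = mat 1 $ (i, a) $ (j, c)"
    using assms by (auto simp: unitary_mat_def mat_def)
  finally show "(controlled_shift V ** adj (controlled_shift V)) $ x $ y = mat 1 $ x $ y"
    using \<open>x = (i, a)\<close> \<open>y = (j, c)\<close> by simp
qed

lemma Psi_controlled_shift_entry:
  "Psi (controlled_shift V) \<rho> $ i $ j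
    = (\<Sum>e\<in>UNIV. \<Sum>g\<in>UNIV. V $ e $ g * cnj (V $ e $ g) * \<rho> $ (i - e + g) $ (j - e + g)) / 3"
proof -
  let ?U = "controlled_shift V"
  have left: "(?U ** tensor_max_mixed \<rho>) $ (i', e) $ (y, g) = V $ e $ g * \<rho> $ (i' - e + g) $ y / 3"
    for i' e y g
    by (simp add: controlled_shift_mult_entry tensor_max_mixed_def if_distrib[of "\<lambda>z. _ * z"]
        cong: if_cong)
  have "(?U ** tensor_max_mixed \<rho> ** adj ?U) $ (i, e) $ (j, e)
      = (\<Sum>g\<in>UNIV. V $ e $ g * cnj (V $ e $ g) * \<rho> $ (i - e + g) $ (j - e + g) / 3)" for e
    by (simp add: mult_adj_controlled_shift_entry left algebra_simps)
  then show ?thesis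
    by (simp add: Psi_def ptrace_E_def sum_divide_distrib)
qed

lemma Psi_controlled_shift_circulant:
  "Psi (controlled_shift (circulant f)) \<rho> $ i $ j = (\<Sum>k\<in>UNIV. f k * cnj (f k) * \<rho> $ (i - k) $ (j - k))"
proof -
  define h where "h k = f k * cnj (f k) * \<rho> $ (i - k) $ (j - k)" for k
  have "Psi (controlled_shift (circulant f)) \<rho> $ i $ j = (\<Sum>e\<in>UNIV. \<Sum>g\<in>UNIV. h (e - g)) / 3"
    by (simp add: Psi_controlled_shift_entry h_def diff_diff_eq2 diff_add_eq)
  also have "\<dots> = (\<Sum>e\<in>(UNIV :: 3 set). \<Sum>k\<in>UNIV. h k) / 3"
    by (simp only: sum_UNIV_diff_reindex)
  finally show ?thesis
    by (simp add: h_def)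
qed

definition shift_mat ::
    "'n::{finite,ab_group_add} \<Rightarrow> 'a::semiring_1 ^ 'n::{finite,ab_group_add} ^ 'n::{finite,ab_group_add}"
  where
  "shift_mat k = (\<chi> i j. if i - j = k then 1 else 0)"

lemma shiftX_eq_shift_mat: "shiftX = shift_mat 1"
  by (simp add: shiftX_def shift_mat_def vec_eq_iff diff_eq_eq add.commute)

lemma shift_mat_mult_entry: "(shift_mat k ** A) $ i $ j = A $ (i - k) $ j"
  by (simp add: shift_mat_def matrix_matrix_mult_def diff_eq_iff_eq_diff if_distrib[of "\<lambda>z. z * _"]
      cong: if_cong)

lemma mult_adj_shift_mat_entry: "(A ** adj (shift_mat k)) $ i $ j = A $ i $ (j - k)"
  by (simp add: shift_mat_def matrix_matrix_mult_def adj_def diff_eq_iff_eq_diff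
      if_distrib[of "\<lambda>z. _ * z"] if_distrib[of cnj] cong: if_cong)

lemma shift_mat_mult: "shift_mat k ** shift_mat l = shift_mat (k + l)"
  by (simp add: vec_eq_iff shift_mat_mult_entry) (simp add: shift_mat_def algebra_simps)

lemma kraus_shift_mat_entry: "kraus (shift_mat k) \<rho> $ i $ j = \<rho> $ (i - k) $ (j - k)"
  by (simp add: kraus_def shift_mat_mult_entry mult_adj_shift_mat_entry)

lemma weyl_channel_entry:
  "weyl_channel p1 p2 p3 \<rho> $ i $ j = (\<Sum>k\<in>UNIV. of_real (cyclic3 p1 p2 p3 k) * \<rho> $ (i - k) $ (j - k))"
  by (simp add: weyl_channel_def shiftX_eq_shift_mat shift_mat_mult kraus_shift_mat_entry sum_UNIV_3)
    (simp add: scaleR_conv_of_real)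

lemma weyl_shift_combination_eq_circulant:
  "p1 *\<^sub>R mat 1 + p2 *\<^sub>R shiftX + p3 *\<^sub>R (shiftX ** shiftX)
    = circulant (\<lambda>k. complex_of_real (cyclic3 p1 p2 p3 k))"
proof -
  have "mat 1 = (shift_mat 0 :: cmat3)"
    by (simp add: mat_def shift_mat_def)
  moreover have "(p1 *\<^sub>R shift_mat 0 + p2 *\<^sub>R shift_mat 1 + p3 *\<^sub>R shift_mat 2 :: cmat3) $ i $ j
      = of_real (cyclic3 p1 p2 p3 (i - j))" for i j
    using exhaust_3_zero[of "i - j"] by (auto simp: shift_mat_def) (auto simp: scaleR_conv_of_real)
  ultimately show ?thesis
    by (simp add: vec_eq_iff shiftX_eq_shift_mat shift_mat_mult)
qed

lemma trace_proj_mult: "trace (proj i ** M) = M $ i $ i"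
proof -
  have "(proj i ** M) $ k $ k = (if k = i then M $ i $ i else 0)" for k
    by (cases "k = i") (simp_all add: proj_def matrix_matrix_mult_def if_distrib[of "\<lambda>z. z * _"]
        cong: if_cong)
  then show ?thesis
    by (simp add: trace_def)
qed

lemma transition_matrix_weyl_channel:
  "transition_matrix (weyl_channel p1 p2 p3) = circulant (\<lambda>k. complex_of_real (cyclic3 p1 p2 p3 k))"
  unfolding transition_matrix_def trace_proj_mult
  by (simp add: vec_eq_iff weyl_channel_entry proj_def diff_eq_iff_eq_diff
      if_distrib[of "\<lambda>z. _ * z"] cong: if_cong)

theorem proposition10:
  fixes p1 p2 p3 :: real
  assumes "p1 \<ge> 0" "p2 \<ge> 0" "p3 \<ge> 0" "p1 + p2 + p3 = 1"
    and "4 * p1^2 * p2 * p3 - (p1 - p1^2 - p2 * p3)^2 \<ge> 0"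
  shows "unistochastic_channel (weyl_channel p1 p2 p3)
    \<and> transition_matrix (weyl_channel p1 p2 p3)
        = p1 *\<^sub>R mat 1 + p2 *\<^sub>R shiftX
          + p3 *\<^sub>R (shiftX ** shiftX)
    \<and> unistochastic_matrix (transition_matrix (weyl_channel p1 p2 p3))"
proof -
  obtain a b c where amp: "a * cnj a = p1" "b * cnj b = p2" "c * cnj c = p3"
    and orth: "a * cnj b + b * cnj c + c * cnj a = 0"
    using hypocycloid_amplitudes[OF assms] by blast
  have amp_sq: "cyclic3 a b c k * cnj (cyclic3 a b c k) = of_real (cyclic3 p1 p2 p3 k)" for k
    using amp by (simp add: cyclic3_def)
  define V where "V = circulant (cyclic3 a b c)"
  have "a * cnj a + b * cnj b + c * cnj c = 1"
    using amp assms(4) by (simp flip: of_real_add)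
  then have V_unitary: "unitary_mat V"
    unfolding V_def using orth by (rule unitary_circulant3)
  have channel: "Psi (controlled_shift V) = weyl_channel p1 p2 p3"
    by (simp add: fun_eq_iff vec_eq_iff V_def Psi_controlled_shift_circulant weyl_channel_entry amp_sq)
  have transition: "transition_matrix (weyl_channel p1 p2 p3) = (\<chi> i j. V $ i $ j * cnj (V $ i $ j))"
    by (simp add: vec_eq_iff V_def amp_sq transition_matrix_weyl_channel)
  show ?thesis
  proof (intro conjI)
    show "unistochastic_channel (weyl_channel p1 p2 p3)"
      unfolding unistochastic_channel_def using unitary_controlled_shift[OF V_unitary] channel by auto
    show "transition_matrix (weyl_channel p1 p2 p3)
        = p1 *\<^sub>R mat 1 + p2 *\<^sub>R shiftX + p3 *\<^sub>R (shiftX ** shiftX)"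
      by (simp only: transition_matrix_weyl_channel weyl_shift_combination_eq_circulant)
    show "unistochastic_matrix (transition_matrix (weyl_channel p1 p2 p3))"
      unfolding unistochastic_matrix_def using V_unitary transition by blast
  qed
qed

end
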